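(* Let $\Omega\subset\mathbb{R}^2$ be bounded and convex with $\delta:=\operatorname{diam}\Omega$, and let $f\in C^\infty(\overline{\Omega})$. Then for all $0<r\le R$, $$\int_\Omega\int_\Omega\frac{|f(x)-f(y)|^2}{|x-y|^3}\,dx\,dy\ \le\ \pi r\int_\Omega|\nabla f|^2\,dx+8\ln\frac Rr\,\|f\|_{L^\infty}\int_\Omega|\nabla f|\,dx+\frac{4\pi\alpha_0}{R}\|f\|_{L^\infty}\min\Big\{\delta\int_{\Omega}|\nabla f|\,dx,\ 2|\Omega|\,\|f\|_{L^\infty}\Big\},$$ where $\alpha_0=1$ if $R<\delta$ and $\alpha_0=0$ otherwise.
   Context: $\|f\|_{L^\infty}$ is the supremum norm of $f$ on $\Omega$; $|\Omega|$ is the Lebesgue measure of $\Omega$. *)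

theory Defs
  imports "HOL-Analysis.Analysis"
begin

text \<open>D is assigns to every finite sequence of coordinate directions (a multi-index, listed
  as the directions of differentiation) the corresponding partial derivative: on the
  interior of S each D is is (Frechet) differentiable with partials D (i # is), and every
  D is extends continuously to the closure of S, with D [] = f there.\<close>
definition smooth_on_closure :: "(real^2 \<Rightarrow> real) \<Rightarrow> (real^2) set \<Rightarrow> bool" where
  "smooth_on_closure f S \<longleftrightarrow>
     (\<exists>D :: 2 list \<Rightarrow> real^2 \<Rightarrow> real.
        (\<forall>x\<in>closure S. D [] x = f x) \<and>
        (\<forall>is. continuous_on (closure S) (D is)) \<and>
        (\<forall>is. \<forall>x\<in>interior S.
            (D is has_derivative (\<lambda>h. \<Sum>i\<in>UNIV. h $ i * D (i # is) x)) (at x)))"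

definition grad :: "(real^2 \<Rightarrow> real) \<Rightarrow> real^2 \<Rightarrow> real^2" where
  "grad f x = (\<chi> i. frechet_derivative f (at x) (axis i 1))"

definition sup_norm_on :: "(real^2 \<Rightarrow> real) \<Rightarrow> (real^2) set \<Rightarrow> real" where
  "sup_norm_on f S = (SUP x\<in>S. \<bar>f x\<bar>)"

end

theory Submission
  imports Defs
begin

(*
  For x, y in the interior U of \<Omega> write h = y - x and integrate the gradient along the segment
  from x to y.  Depending on |h|, the quotient (f x - f y)^2 / |h|^3 is bounded by the segment
  average of (grad f \<bullet> h)^2 / |h|^3 (for |h| \<le> r), by that of 2 M |grad f \<bullet> h| / |h|^3 (for
  r \<le> |h| \<le> R), and, for R \<le> |h| \<le> diam \<Omega>, either by that of 2 M |grad f| / |h|^2 or simply by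
  4 M^2 / |h|^3; these two alternatives produce the minimum in the statement.  The substitution
  z = x + t h turns the double integral of the segment averages into an integral over all z and h.
  The h-integrals are computed in polar coordinates: averaging over rotations gives the factors
  |v|^2 / 2 and 2 |v| / pi for (v \<bullet> h)^2 and |v \<bullet> h|, and the radial integrals give 2 pi r,
  2 pi ln (R / r), 2 pi ln (diam \<Omega> / R) \<le> 2 pi diam \<Omega> / R and 2 pi / R.  Since \<Omega> is convex,
  its boundary is a null set, so nothing is lost by working on U.
*)

section \<open>Polar coordinates in the plane\<close>

lemma distr_norm_lborel_real2:
  "distr (lborel :: (real^2) measure) borel norm = density lborel (\<lambda>s. ennreal (2 * pi * s) * indicator {0<..} s)"
proof (rule measure_eqI_generator_eq_countable
    [where E="range lessThan" and \<Omega>=UNIV and A="range (\<lambda>n::nat. {..<real n})"])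
  show "Int_stable (range lessThan :: real set set)"
    unfolding Int_stable_def by (auto simp: greaterThan_Int_greaterThan)
  show "sets (distr (lborel :: (real^2) measure) borel norm) = sigma_sets UNIV (range lessThan)"
    "sets (density lborel (\<lambda>s. ennreal (2 * pi * s) * indicator {0<..} s)) = sigma_sets UNIV (range lessThan)"
    by (simp_all add: borel_Iio)
  show "range (\<lambda>n::nat. {..<real n}) \<subseteq> range lessThan" "countable (range (\<lambda>n::nat. {..<real n}))"
    "\<Union> (range (\<lambda>n::nat. {..<real n})) = UNIV" "range lessThan \<subseteq> Pow (UNIV :: real set)"
    by (auto intro: reals_Archimedean2)
  have distr_Iio: "emeasure (distr (lborel :: (real^2) measure) borel norm) {..<a}
      = (if a \<le> 0 then 0 else ennreal (pi * a^2))" for a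
  proof -
    have "emeasure (distr (lborel :: (real^2) measure) borel norm) {..<a} = emeasure lborel (ball (0 :: real^2) a)"
      by (subst emeasure_distr) (auto intro!: arg_cong2[where f=emeasure] simp: dist_norm)
    also have "\<dots> = (if a \<le> 0 then 0 else ennreal (pi * a^2))"
      using emeasure_ball[of a "0 :: real^2"] by (auto simp: unit_ball_vol_2 mult.commute ball_empty)
    finally show ?thesis .
  qed
  show "emeasure (distr (lborel :: (real^2) measure) borel norm) X \<noteq> \<infinity>" if "X \<in> range (\<lambda>n::nat. {..<real n})" for X
    using that distr_Iio by (auto split: if_splits)
  show "emeasure (distr (lborel :: (real^2) measure) borel norm) X
      = emeasure (density lborel (\<lambda>s. ennreal (2 * pi * s) * indicator {0<..} s)) X"
    if "X \<in> range lessThan" for X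
  proof -
    from that obtain a where X: "X = {..<a}" by auto
    have "emeasure (density lborel (\<lambda>s. ennreal (2 * pi * s) * indicator {0<..} s)) {..<a}
       = (\<integral>\<^sup>+s. ennreal (2 * pi * s) * indicator {0<..<a} s \<partial>lborel)"
      by (subst emeasure_density) (auto intro!: nn_integral_cong split: split_indicator)
    also have "\<dots> = (if a \<le> 0 then 0 else ennreal (pi * a^2))"
    proof (cases "a \<le> 0")
      case False
      have "((\<lambda>s. 2 * pi * s) has_integral (pi * a^2 - pi * 0^2)) {0..a}"
        using False by (intro fundamental_theorem_of_calculus)
          (auto intro!: derivative_eq_intros simp: has_real_derivative_iff_has_vector_derivative[symmetric])
      then have "((\<lambda>s. 2 * pi * s) has_integral (pi * a^2)) {0<..<a}"
        by (simp add: has_integral_Icc_iff_Ioo)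
      then show ?thesis using False by (subst nn_integral_has_integral_lebesgue') auto
    qed simp
    finally show ?thesis using X distr_Iio by simp
  qed
qed

lemma nn_integral_radial_real2:
  fixes \<psi> :: "real \<Rightarrow> ennreal"
  assumes [measurable]: "\<psi> \<in> borel_measurable borel"
  shows "(\<integral>\<^sup>+h. \<psi> (norm h) \<partial>(lborel :: (real^2) measure)) = (\<integral>\<^sup>+s\<in>{0<..}. ennreal (2 * pi * s) * \<psi> s \<partial>lborel)"
proof -
  have "(\<integral>\<^sup>+h. \<psi> (norm h) \<partial>(lborel :: (real^2) measure)) = (\<integral>\<^sup>+s. \<psi> s \<partial>distr (lborel :: (real^2) measure) borel norm)"
    by (subst nn_integral_distr) auto
  also have "\<dots> = (\<integral>\<^sup>+s\<in>{0<..}. ennreal (2 * pi * s) * \<psi> s \<partial>lborel)"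
    unfolding distr_norm_lborel_real2 by (subst nn_integral_density) (auto simp: mult_ac)
  finally show ?thesis .
qed

lemma nn_integral_annulus_real2:
  fixes \<phi> \<Phi> :: "real \<Rightarrow> real"
  assumes "0 \<le> a" "a \<le> b" and [measurable]: "\<phi> \<in> borel_measurable borel"
    and "continuous_on {a..b} \<Phi>" and "\<And>s. s \<in> {a<..<b} \<Longrightarrow> (\<Phi> has_real_derivative s * \<phi> s) (at s)"
    and \<phi>_nonneg: "\<And>s. s \<in> {a..b} \<Longrightarrow> 0 \<le> \<phi> s"
  shows "(\<integral>\<^sup>+h. ennreal (indicator {a..b} (norm h) * \<phi> (norm h)) \<partial>(lborel :: (real^2) measure))
    = ennreal (2 * pi * (\<Phi> b - \<Phi> a))"
proof -
  have ftc: "((\<lambda>s. 2 * pi * (s * \<phi> s)) has_integral 2 * pi * (\<Phi> b - \<Phi> a)) {a..b}"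
    by (intro has_integral_mult_right fundamental_theorem_of_calculus_interior)
      (use assms in \<open>auto simp: has_real_derivative_iff_has_vector_derivative\<close>)
  have "(\<integral>\<^sup>+h. ennreal (indicator {a..b} (norm h) * \<phi> (norm h)) \<partial>(lborel :: (real^2) measure))
      = (\<integral>\<^sup>+s\<in>{0<..}. ennreal (2 * pi * s) * ennreal (indicator {a..b} s * \<phi> s) \<partial>lborel)"
    by (rule nn_integral_radial_real2) measurable
  also have "\<dots> = (\<integral>\<^sup>+s. ennreal (2 * pi * (s * \<phi> s)) * indicator {a..b} s \<partial>lborel)"
    using \<open>0 \<le> a\<close> \<phi>_nonneg
    by (intro nn_integral_cong) (auto simp: ennreal_mult'[symmetric] mult_ac split: split_indicator)
  also have "\<dots> = ennreal (2 * pi * (\<Phi> b - \<Phi> a))"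
    using \<open>0 \<le> a\<close> \<phi>_nonneg by (intro nn_integral_has_integral_lebesgue' ftc) auto
  finally show ?thesis .
qed

section \<open>Averaging over rotations\<close>

lemma integral_shift_period:
  fixes g :: "real \<Rightarrow> real"
  assumes periodic: "\<And>t. g (t + p) = g t" and "continuous_on UNIV g" and c: "0 \<le> c" "c \<le> p"
  shows "integral {c..c+p} g = integral {0..p} g"
proof -
  have int: "g integrable_on {a..b}" for a b
    using assms(2) by (intro integrable_continuous_real) (rule continuous_on_subset, auto)
  have "integral {p..c+p} g = integral {0..c} (g \<circ> (+) p)"
    by (simp add: integral_shift_Icc_real add.commute)
  also have "g \<circ> (+) p = g"
    using periodic by (simp add: fun_eq_iff add.commute)
  finally have "integral {p..c+p} g = integral {0..c} g" .
  then show ?thesis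
    using Henstock_Kurzweil_Integration.integral_combine[where a=c and c=p and b="c+p" and f=g]
      Henstock_Kurzweil_Integration.integral_combine[where a=0 and c=c and b=p and f=g] c int
    by simp
qed

lemma integral_abs_cos_period: "integral {0..2*pi} (\<lambda>t. \<bar>cos t\<bar>) = 4"
proof -
  have sin_values: "sin (pi/2) = 1" "sin (3/2*pi) = -1" "sin (pi/2 + 2*pi) = 1"
    by (simp_all only: sin_pi_half sin_3over2_pi sin_periodic)
  have "((\<lambda>t. \<bar>cos t\<bar>) has_integral (- sin (3/2*pi) - - sin (pi/2))) {pi/2..3/2*pi}"
  proof (rule has_integral_eq[rotated])
    show "((\<lambda>t. - cos t) has_integral (- sin (3/2*pi) - - sin (pi/2))) {pi/2..3/2*pi}"
      by (intro fundamental_theorem_of_calculus)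
        (auto intro!: derivative_eq_intros simp: has_real_derivative_iff_has_vector_derivative[symmetric])
    show "- cos t = \<bar>cos t\<bar>" if "t \<in> {pi/2..3/2*pi}" for t
      using that cos_ge_zero[of "t - pi"] by (simp add: cos_diff)
  qed
  moreover have "((\<lambda>t. \<bar>cos t\<bar>) has_integral (sin (pi/2 + 2*pi) - sin (3/2*pi))) {3/2*pi..pi/2 + 2*pi}"
  proof (rule has_integral_eq[rotated])
    show "((\<lambda>t. cos t) has_integral (sin (pi/2 + 2*pi) - sin (3/2*pi))) {3/2*pi..pi/2 + 2*pi}"
      by (intro fundamental_theorem_of_calculus)
        (auto intro!: derivative_eq_intros simp: has_real_derivative_iff_has_vector_derivative[symmetric])
    show "cos t = \<bar>cos t\<bar>" if "t \<in> {3/2*pi..pi/2 + 2*pi}" for t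
      using that cos_ge_zero[of "t - 2*pi"] by (simp add: cos_diff)
  qed
  ultimately have "((\<lambda>t. \<bar>cos t\<bar>) has_integral 2 + 2) {pi/2..pi/2 + 2*pi}"
    unfolding sin_values by (intro has_integral_combine[where c="3/2*pi"]) auto
  then show ?thesis
    using integral_shift_period[of "\<lambda>t. \<bar>cos t\<bar>" "2*pi" "pi/2"]
    by (simp add: integral_unique continuous_intros)
qed

lemma nn_integral_abs_harmonic:
  fixes A B :: real
  shows "(\<integral>\<^sup>+\<theta>\<in>{0..2*pi}. ennreal \<bar>A * cos \<theta> + B * sin \<theta>\<bar> \<partial>lborel) = ennreal (4 * sqrt (A^2 + B^2))"
proof (cases "A = 0 \<and> B = 0")
  case False
  define \<rho> where "\<rho> = sqrt (A^2 + B^2)"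
  have "0 < A^2 + B^2" using False by (metis sum_power2_gt_zero_iff)
  then have "\<rho> > 0" unfolding \<rho>_def by (rule real_sqrt_gt_zero)
  have "(A/\<rho>)^2 + (B/\<rho>)^2 = (A^2 + B^2) / \<rho>^2"
    by (simp add: power_divide add_divide_distrib)
  also have "\<dots> = 1"
    using False by (simp add: \<rho>_def)
  finally have "(A/\<rho>)^2 + (B/\<rho>)^2 = 1" .
  then obtain b where b: "0 \<le> b" "b < 2*pi" "A/\<rho> = cos b" "B/\<rho> = sin b"
    by (rule sincos_total_2pi)
  \<comment> \<open>The phase is written as a shift by 2 pi - b, which lies in [0, 2 pi] as required by the
    periodicity lemma.\<close>
  have harmonic: "\<bar>A * cos \<theta> + B * sin \<theta>\<bar> = \<rho> * \<bar>cos (2*pi - b + \<theta>)\<bar>" for \<theta>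
  proof -
    have "A = \<rho> * cos b" "B = \<rho> * sin b"
      using b \<open>\<rho> > 0\<close> by (simp_all add: field_simps)
    then have "A * cos \<theta> + B * sin \<theta> = \<rho> * cos (\<theta> - b)"
      by (simp add: cos_diff algebra_simps)
    moreover have "cos (\<theta> - b) = cos (2*pi - b + \<theta>)"
      using cos_periodic[of "\<theta> - b"] by (simp add: algebra_simps)
    ultimately show ?thesis using \<open>\<rho> > 0\<close> by (simp add: abs_mult)
  qed
  have "integral {0..2*pi} (\<lambda>\<theta>. \<bar>cos (2*pi - b + \<theta>)\<bar>) = integral {2*pi - b..2*pi - b + 2*pi} (\<lambda>t. \<bar>cos t\<bar>)"
    using integral_shift_Icc_real[of 0 "2*pi" "\<lambda>t. \<bar>cos t\<bar>" "2*pi - b"] by (simp add: o_def)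
  also have "\<dots> = 4"
    using b integral_shift_period[of "\<lambda>t. \<bar>cos t\<bar>" "2*pi" "2*pi - b"]
    by (simp add: integral_abs_cos_period continuous_intros)
  finally have "integral {0..2*pi} (\<lambda>\<theta>. \<bar>cos (2*pi - b + \<theta>)\<bar>) = 4" .
  moreover have "(\<lambda>\<theta>. \<bar>cos (2*pi - b + \<theta>)\<bar>) integrable_on {0..2*pi}"
    by (intro integrable_continuous_real continuous_intros)
  ultimately have "((\<lambda>\<theta>. \<bar>cos (2*pi - b + \<theta>)\<bar>) has_integral 4) {0..2*pi}"
    using integrable_integral by fastforce
  then have "((\<lambda>\<theta>. \<bar>A * cos \<theta> + B * sin \<theta>\<bar>) has_integral \<rho> * 4) {0..2*pi}"
    unfolding harmonic by (rule has_integral_mult_right)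
  then show ?thesis
    by (subst nn_integral_has_integral_lebesgue') (auto simp: \<rho>_def mult.commute)
qed simp

lemma nn_integral_square_harmonic:
  fixes A B :: real
  shows "(\<integral>\<^sup>+\<theta>\<in>{0..2*pi}. ennreal ((A * cos \<theta> + B * sin \<theta>)^2) \<partial>lborel) = ennreal (pi * (A^2 + B^2))"
proof -
  define F where "F \<theta> = A^2 * (\<theta> + sin \<theta> * cos \<theta>) / 2 + A * B * (sin \<theta>)^2 + B^2 * (\<theta> - sin \<theta> * cos \<theta>) / 2" for \<theta>
  have "(F has_real_derivative (A * cos \<theta> + B * sin \<theta>)^2) (at \<theta>)" for \<theta>
  proof -
    have "(F has_real_derivative A^2 * (1 + (cos \<theta> * cos \<theta> - sin \<theta> * sin \<theta>)) / 2
        + A * B * (2 * sin \<theta> * cos \<theta>) + B^2 * (1 - (cos \<theta> * cos \<theta> - sin \<theta> * sin \<theta>)) / 2) (at \<theta>)"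
      unfolding F_def by (auto intro!: derivative_eq_intros simp: power2_eq_square)
    moreover have "sin \<theta> * sin \<theta> = 1 - cos \<theta> * cos \<theta>"
      using sin_cos_squared_add[of \<theta>] by (simp add: power2_eq_square)
    then have "A^2 * (1 + (cos \<theta> * cos \<theta> - sin \<theta> * sin \<theta>)) / 2 + A * B * (2 * sin \<theta> * cos \<theta>)
        + B^2 * (1 - (cos \<theta> * cos \<theta> - sin \<theta> * sin \<theta>)) / 2 = (A * cos \<theta> + B * sin \<theta>)^2"
      unfolding power2_eq_square by algebra
    ultimately show ?thesis by simp
  qed
  then have "((\<lambda>\<theta>. (A * cos \<theta> + B * sin \<theta>)^2) has_integral (F (2*pi) - F 0)) {0..2*pi}"
    by (intro fundamental_theorem_of_calculus)
      (auto simp: has_real_derivative_iff_has_vector_derivative[symmetric] intro: DERIV_subset)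
  moreover have "F (2*pi) - F 0 = pi * (A^2 + B^2)"
    by (simp add: F_def algebra_simps)
  ultimately show ?thesis
    by (subst nn_integral_has_integral_lebesgue') auto
qed

definition plane_rotation :: "real \<Rightarrow> real^2 \<Rightarrow> real^2" where
  "plane_rotation t h = vector [h$1 * cos t - h$2 * sin t, h$1 * sin t + h$2 * cos t]"

lemma plane_rotation_nth [simp]:
  "plane_rotation t h $ 1 = h$1 * cos t - h$2 * sin t"
  "plane_rotation t h $ 2 = h$1 * sin t + h$2 * cos t"
  by (simp_all add: plane_rotation_def)

lemma inner_real2: "(x :: real^2) \<bullet> y = x$1 * y$1 + x$2 * y$2"
  by (simp add: inner_vec_def sum_2)

lemma inner_plane_rotation_right:
  "v \<bullet> plane_rotation t h = (v \<bullet> h) * cos t + (v$2 * h$1 - v$1 * h$2) * sin t"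
  unfolding inner_real2 plane_rotation_nth by (simp add: algebra_simps)

lemma inner_square_add_cross_square_real2:
  fixes v h :: "real^2"
  shows "(v \<bullet> h)^2 + (v$2 * h$1 - v$1 * h$2)^2 = (norm v * norm h)^2"
  unfolding power_mult_distrib power2_norm_eq_inner inner_real2 by (simp add: power2_eq_square algebra_simps)

lemma orthogonal_transformation_plane_rotation: "orthogonal_transformation (plane_rotation t)"
proof -
  have "sin t * sin t = 1 - cos t * cos t"
    using sin_cos_squared_add[of t] by (simp add: power2_eq_square)
  then have "plane_rotation t x \<bullet> plane_rotation t y = x \<bullet> y" for x y
    unfolding inner_real2 plane_rotation_nth by algebra
  moreover have "linear (plane_rotation t)"
    by (rule linearI) (auto simp: vec_eq_iff forall_2 algebra_simps)
  ultimately show ?thesis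
    by (simp add: orthogonal_transformation_def)
qed

lemma norm_plane_rotation [simp]: "norm (plane_rotation t h) = norm h"
  using orthogonal_transformation_plane_rotation by (rule orthogonal_transformation_norm)

lemma borel_measurable_plane_rotation [measurable (raw)]:
  assumes "f \<in> borel_measurable M" "g \<in> borel_measurable M"
  shows "(\<lambda>x. plane_rotation (f x) (g x)) \<in> borel_measurable M"
proof -
  have "plane_rotation t h = (\<chi> i. if i = 1 then h$1 * cos t - h$2 * sin t else h$1 * sin t + h$2 * cos t)" for t h
    by (simp add: vec_eq_iff forall_2)
  moreover have "continuous_on UNIV (\<lambda>p :: real \<times> (real^2).
      if i = 1 then snd p $ 1 * cos (fst p) - snd p $ 2 * sin (fst p)
      else snd p $ 1 * sin (fst p) + snd p $ 2 * cos (fst p))"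
    for i :: 2
    by (cases "i = 1") (auto intro!: continuous_intros)
  ultimately have "continuous_on UNIV (\<lambda>p :: real \<times> (real^2). plane_rotation (fst p) (snd p))"
    by (auto intro: continuous_on_vec_lambda)
  then have "(\<lambda>p :: real \<times> (real^2). plane_rotation (fst p) (snd p)) \<in> borel_measurable (borel \<Otimes>\<^sub>M borel)"
    unfolding borel_prod by (rule borel_measurable_continuous_onI)
  from measurable_compose[OF measurable_Pair[OF assms] this] show ?thesis by simp
qed

lemma distr_lborel_orthogonal_transformation:
  fixes T :: "real^'n::{finite,wellorder} \<Rightarrow> real^'n::_"
  assumes T: "orthogonal_transformation T"
  shows "distr lborel borel T = lborel"
proof (rule lborel_eqI[symmetric])
  have [measurable]: "T \<in> borel_measurable borel"
    using T by (intro borel_measurable_continuous_onI linear_continuous_on)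
      (simp add: orthogonal_transformation_linear linear_linear)
  fix l u :: "(real, 'n) vec"
  assume "\<And>b. b \<in> Basis \<Longrightarrow> l \<bullet> b \<le> u \<bullet> b"
  then have box: "emeasure lborel (box l u) = (\<Prod>b\<in>Basis. (u - l) \<bullet> b)"
    by (simp add: emeasure_lborel_box_eq)
  have "emeasure (distr lborel borel T) (box l u) = emeasure lborel (T -` box l u)"
    by (subst emeasure_distr) auto
  also have "\<dots> = emeasure lebesgue (T -` box l u)"
    using measurable_sets_borel[of T borel "box l u"] by simp
  also have "T -` box l u = inv T ` box l u"
    using orthogonal_transformation_bij[OF T] by (simp add: bij_vimage_eq_inv_image)
  also have "emeasure lebesgue (inv T ` box l u) = emeasure lebesgue (box l u)"
    using measurable_orthogonal_image[OF orthogonal_transformation_inv[OF T]]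
      measure_orthogonal_image[OF orthogonal_transformation_inv[OF T]]
    by (simp add: emeasure_eq_measure2)
  finally show "emeasure (distr lborel borel T) (box l u) = (\<Prod>b\<in>Basis. (u - l) \<bullet> b)"
    using box by simp
qed simp

lemma nn_integral_rotation_average:
  fixes \<phi> :: "real^2 \<Rightarrow> ennreal"
  assumes [measurable]: "\<phi> \<in> borel_measurable borel"
  shows "ennreal (2*pi) * (\<integral>\<^sup>+h. \<phi> h \<partial>lborel) = (\<integral>\<^sup>+h. (\<integral>\<^sup>+t\<in>{0..2*pi}. \<phi> (plane_rotation t h) \<partial>lborel) \<partial>lborel)"
proof -
  have rotation_invariant: "(\<integral>\<^sup>+h. \<phi> (plane_rotation t h) \<partial>lborel) = (\<integral>\<^sup>+h. \<phi> h \<partial>lborel)" for t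
    using distr_lborel_orthogonal_transformation[OF orthogonal_transformation_plane_rotation, of t]
      nn_integral_distr[of "plane_rotation t" lborel borel \<phi>]
    by simp
  have "ennreal (2*pi) * (\<integral>\<^sup>+h. \<phi> h \<partial>lborel) = (\<integral>\<^sup>+t\<in>{0..2*pi}. (\<integral>\<^sup>+h. \<phi> (plane_rotation t h) \<partial>lborel) \<partial>lborel)"
    by (simp add: rotation_invariant nn_integral_cmult_indicator mult.commute)
  also have "\<dots> = (\<integral>\<^sup>+t. (\<integral>\<^sup>+h. \<phi> (plane_rotation t h) * indicator {0..2*pi} t \<partial>lborel) \<partial>lborel)"
    by (subst nn_integral_multc) auto
  also have "\<dots> = (\<integral>\<^sup>+h. (\<integral>\<^sup>+t\<in>{0..2*pi}. \<phi> (plane_rotation t h) \<partial>lborel) \<partial>lborel)"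
    by (rule lborel_pair.Fubini') measurable
  finally show ?thesis .
qed

lemma nn_integral_radial_mult_inner:
  fixes K F :: "real \<Rightarrow> real" and v :: "real^2"
  assumes [measurable]: "K \<in> borel_measurable borel" "F \<in> borel_measurable borel"
    and K_nonneg: "\<And>s. 0 \<le> K s" and "0 \<le> c"
    and angular: "\<And>A B. (\<integral>\<^sup>+\<theta>\<in>{0..2*pi}. ennreal (F (A * cos \<theta> + B * sin \<theta>)) \<partial>lborel)
      = ennreal (c * sqrt (A^2 + B^2) ^ k)"
  shows "(\<integral>\<^sup>+h. ennreal (K (norm h) * F (v \<bullet> h)) \<partial>lborel)
    = ennreal (c / (2*pi) * norm v ^ k) * (\<integral>\<^sup>+(h::real^2). ennreal (K (norm h) * norm h ^ k) \<partial>lborel)"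
proof -
  have "ennreal (2*pi) * (\<integral>\<^sup>+h. ennreal (K (norm h) * F (v \<bullet> h)) \<partial>lborel)
      = (\<integral>\<^sup>+h. (\<integral>\<^sup>+t\<in>{0..2*pi}. ennreal (K (norm h) * F (v \<bullet> plane_rotation t h)) \<partial>lborel) \<partial>lborel)"
    by (subst nn_integral_rotation_average) auto
  also have "\<dots> = (\<integral>\<^sup>+(h::real^2). ennreal (c * norm v ^ k) * ennreal (K (norm h) * norm h ^ k) \<partial>lborel)"
  proof (rule nn_integral_cong)
    fix h :: "real^2"
    have "(\<integral>\<^sup>+t\<in>{0..2*pi}. ennreal (K (norm h) * F (v \<bullet> plane_rotation t h)) \<partial>lborel)
        = ennreal (K (norm h))
          * (\<integral>\<^sup>+t\<in>{0..2*pi}. ennreal (F ((v \<bullet> h) * cos t + (v$2 * h$1 - v$1 * h$2) * sin t)) \<partial>lborel)"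
      using K_nonneg
      by (subst nn_integral_cmult[symmetric]) (auto simp: inner_plane_rotation_right ennreal_mult' mult_ac)
    also have "\<dots> = ennreal (K (norm h)) * ennreal (c * (norm v * norm h) ^ k)"
      by (simp add: angular inner_square_add_cross_square_real2)
    finally show "(\<integral>\<^sup>+t\<in>{0..2*pi}. ennreal (K (norm h) * F (v \<bullet> plane_rotation t h)) \<partial>lborel)
        = ennreal (c * norm v ^ k) * ennreal (K (norm h) * norm h ^ k)"
      using K_nonneg \<open>0 \<le> c\<close> by (simp add: ennreal_mult'[symmetric] power_mult_distrib mult_ac)
  qed
  also have "\<dots> = ennreal (c * norm v ^ k) * (\<integral>\<^sup>+(h::real^2). ennreal (K (norm h) * norm h ^ k) \<partial>lborel)"
    by (rule nn_integral_cmult) measurable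
  also have "\<dots> = ennreal (2*pi)
      * (ennreal (c / (2*pi) * norm v ^ k) * (\<integral>\<^sup>+(h::real^2). ennreal (K (norm h) * norm h ^ k) \<partial>lborel))"
    using \<open>0 \<le> c\<close> by (simp add: ennreal_mult'[symmetric] mult.assoc[symmetric])
  finally show ?thesis
    by (subst (asm) ennreal_mult_cancel_left) auto
qed

lemma nn_integral_radial_mult_inner_square:
  fixes K :: "real \<Rightarrow> real" and v :: "real^2"
  assumes "K \<in> borel_measurable borel" "\<And>s. 0 \<le> K s"
  shows "(\<integral>\<^sup>+h. ennreal (K (norm h) * (v \<bullet> h)^2) \<partial>lborel)
    = ennreal (norm v ^ 2 / 2) * (\<integral>\<^sup>+(h::real^2). ennreal (K (norm h) * norm h ^ 2) \<partial>lborel)"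
  using nn_integral_radial_mult_inner[of K "\<lambda>x. x^2" pi 2 v] assms
  by (simp add: nn_integral_square_harmonic)

lemma nn_integral_radial_mult_abs_inner:
  fixes K :: "real \<Rightarrow> real" and v :: "real^2"
  assumes "K \<in> borel_measurable borel" "\<And>s. 0 \<le> K s"
  shows "(\<integral>\<^sup>+h. ennreal (K (norm h) * \<bar>v \<bullet> h\<bar>) \<partial>lborel)
    = ennreal (2 * norm v / pi) * (\<integral>\<^sup>+(h::real^2). ennreal (K (norm h) * norm h) \<partial>lborel)"
  using nn_integral_radial_mult_inner[of K abs 4 1 v] assms
  by (simp add: nn_integral_abs_harmonic)

section \<open>Difference quotients along segments\<close>

lemma has_integral_derivative_segment:
  fixes f :: "'a::real_inner \<Rightarrow> real" and g :: "'a \<Rightarrow> 'a"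
  assumes "convex U" and deriv: "\<And>z. z \<in> U \<Longrightarrow> (f has_derivative (\<lambda>k. g z \<bullet> k)) (at z)"
    and "x \<in> U" "y \<in> U"
  shows "((\<lambda>t. g (x + t *\<^sub>R (y - x)) \<bullet> (y - x)) has_integral f y - f x) {0..1}"
proof -
  have "((\<lambda>t. f (x + t *\<^sub>R (y - x))) has_vector_derivative g (x + t *\<^sub>R (y - x)) \<bullet> (y - x)) (at t within {0..1})"
    if "t \<in> {0..1}" for t
  proof -
    have "x + t *\<^sub>R (y - x) \<in> U"
      using convexD_alt[OF \<open>convex U\<close> \<open>x \<in> U\<close> \<open>y \<in> U\<close>, of t] that by (simp add: algebra_simps)
    have "((\<lambda>t. x + t *\<^sub>R (y - x)) has_derivative (\<lambda>s. s *\<^sub>R (y - x))) (at t)"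
      by (auto intro!: derivative_eq_intros)
    from diff_chain_at[OF this deriv[OF \<open>x + t *\<^sub>R (y - x) \<in> U\<close>]]
    have "((\<lambda>t. f (x + t *\<^sub>R (y - x))) has_derivative (\<lambda>s. s *\<^sub>R (g (x + t *\<^sub>R (y - x)) \<bullet> (y - x)))) (at t)"
      by (simp add: o_def inner_scaleR_right)
    then show ?thesis
      unfolding has_vector_derivative_def by (rule has_derivative_at_withinI)
  qed
  from fundamental_theorem_of_calculus[OF _ this] show ?thesis
    by simp
qed

lemma square_le_integral_square_unit_interval:
  fixes u :: "real \<Rightarrow> real"
  assumes u: "(u has_integral c) {0..1}" and "(\<lambda>t. (u t)^2) integrable_on {0..1}"
  shows "c^2 \<le> integral {0..1} (\<lambda>t. (u t)^2)"
proof -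
  have "((\<lambda>t. (u t)^2 - 2 * c * u t + c^2) has_integral integral {0..1} (\<lambda>t. (u t)^2) - 2 * c * c + c^2) {0..1}"
    using has_integral_const_real[of "c^2" 0 1] assms
    by (intro has_integral_add has_integral_diff has_integral_mult_right integrable_integral) auto
  moreover have "0 \<le> (u t)^2 - 2 * c * u t + c^2" for t
    using zero_le_power2[of "u t - c"] by (simp add: power2_diff algebra_simps)
  ultimately have "0 \<le> integral {0..1} (\<lambda>t. (u t)^2) - 2 * c * c + c^2"
    by (rule has_integral_nonneg)
  then show ?thesis
    by (simp add: power2_eq_square)
qed

definition shell_kernel :: "real \<Rightarrow> real \<Rightarrow> real \<Rightarrow> real" where
  "shell_kernel a b s = indicator {a..b} s / s ^ 3"

definition local_kernel :: "real \<Rightarrow> real \<Rightarrow> real \<Rightarrow> 'a::real_inner \<Rightarrow> 'a \<Rightarrow> real" where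
  "local_kernel M r R v h = shell_kernel 0 r (norm h) * (v \<bullet> h)^2 + 2 * M * shell_kernel r R (norm h) * \<bar>v \<bullet> h\<bar>"

lemma shell_kernel_nonneg: "0 \<le> a \<Longrightarrow> 0 \<le> shell_kernel a b s"
  by (simp add: shell_kernel_def indicator_def)

lemma borel_measurable_shell_kernel [measurable]: "shell_kernel a b \<in> borel_measurable borel"
  unfolding shell_kernel_def[abs_def] by measurable

lemma local_kernel_nonneg: "0 \<le> M \<Longrightarrow> 0 \<le> r \<Longrightarrow> 0 \<le> local_kernel M r R v h"
  by (simp add: local_kernel_def shell_kernel_nonneg)

lemma borel_measurable_local_kernel [measurable (raw)]:
  fixes a b :: "'b \<Rightarrow> 'a::euclidean_space"
  assumes "a \<in> borel_measurable N" "b \<in> borel_measurable N"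
  shows "(\<lambda>x. local_kernel M r R (a x) (b x)) \<in> borel_measurable N"
  unfolding local_kernel_def using assms by measurable

lemma square_le_mult_of_abs_le:
  fixes x a b :: real
  assumes "\<bar>x\<bar> \<le> a" "\<bar>x\<bar> \<le> b"
  shows "x^2 \<le> a * b"
  using mult_mono[OF assms order_trans[OF abs_ge_zero assms(1)] abs_ge_zero] by (simp add: power2_eq_square)

lemma divide_cube_le_shell_kernel:
  fixes x \<rho> :: real
  assumes "\<rho> \<in> {a..b}" "0 \<le> \<rho>" "x \<le> C"
  shows "x / \<rho>^3 \<le> C * shell_kernel a b \<rho>"
  using assms by (simp add: shell_kernel_def divide_right_mono)

lemma difference_quotient_le_shell_kernels:
  fixes \<Delta> \<rho> I1 I2 J M r R d :: real
  assumes "0 < r" "r \<le> R" "0 \<le> \<rho>" "\<rho> \<le> d"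
    and \<Delta>_M: "\<bar>\<Delta>\<bar> \<le> 2 * M" and \<Delta>_I2: "\<Delta>^2 \<le> I2" and \<Delta>_I1: "\<bar>\<Delta>\<bar> \<le> I1" and \<Delta>_J: "\<bar>\<Delta>\<bar> \<le> J"
  shows "\<Delta>^2 / \<rho>^3 \<le> shell_kernel 0 r \<rho> * I2 + 2 * M * shell_kernel r R \<rho> * I1 + 2 * M * shell_kernel R d \<rho> * J"
    and "\<Delta>^2 / \<rho>^3 \<le> shell_kernel 0 r \<rho> * I2 + 2 * M * shell_kernel r R \<rho> * I1 + 4 * M^2 * shell_kernel R d \<rho>"
proof -
  have "0 \<le> M" "0 \<le> I1" "0 \<le> J" "0 \<le> I2"
    using \<Delta>_M \<Delta>_I1 \<Delta>_J \<Delta>_I2 by (auto intro: order_trans[OF zero_le_power2])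
  then have near_nonneg: "0 \<le> shell_kernel 0 r \<rho> * I2" and middle_nonneg: "0 \<le> 2 * M * shell_kernel r R \<rho> * I1"
    and far_nonneg: "0 \<le> 2 * M * shell_kernel R d \<rho> * J" "0 \<le> 4 * M^2 * shell_kernel R d \<rho>"
    using assms by (auto intro!: mult_nonneg_nonneg shell_kernel_nonneg)
  have "\<Delta>^2 \<le> 2 * M * I1" "\<Delta>^2 \<le> 2 * M * J"
    using square_le_mult_of_abs_le[OF \<Delta>_M] \<Delta>_I1 \<Delta>_J by auto
  moreover have "\<Delta>^2 \<le> 4 * M^2"
    using square_le_mult_of_abs_le[OF \<Delta>_M \<Delta>_M] by (simp add: power2_eq_square algebra_simps)
  ultimately have near: "\<rho> \<in> {0..r} \<Longrightarrow> \<Delta>^2 / \<rho>^3 \<le> shell_kernel 0 r \<rho> * I2"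
    and middle: "\<rho> \<in> {r..R} \<Longrightarrow> \<Delta>^2 / \<rho>^3 \<le> 2 * M * shell_kernel r R \<rho> * I1"
    and far: "\<rho> \<in> {R..d} \<Longrightarrow> \<Delta>^2 / \<rho>^3 \<le> 2 * M * shell_kernel R d \<rho> * J"
      "\<rho> \<in> {R..d} \<Longrightarrow> \<Delta>^2 / \<rho>^3 \<le> 4 * M^2 * shell_kernel R d \<rho>"
    using divide_cube_le_shell_kernel[OF _ \<open>0 \<le> \<rho>\<close>] \<Delta>_I2 by (metis mult.commute mult.assoc)+
  consider "\<rho> \<in> {0..r}" | "\<rho> \<in> {r..R}" | "\<rho> \<in> {R..d}"
    using assms by fastforce
  note ranges = this
  show "\<Delta>^2 / \<rho>^3 \<le> shell_kernel 0 r \<rho> * I2 + 2 * M * shell_kernel r R \<rho> * I1 + 2 * M * shell_kernel R d \<rho> * J"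
    using ranges
  proof cases
    case 1 from near[OF 1] middle_nonneg far_nonneg(1) show ?thesis by linarith
  next
    case 2 from middle[OF 2] near_nonneg far_nonneg(1) show ?thesis by linarith
  next
    case 3 from far(1)[OF 3] near_nonneg middle_nonneg show ?thesis by linarith
  qed
  show "\<Delta>^2 / \<rho>^3 \<le> shell_kernel 0 r \<rho> * I2 + 2 * M * shell_kernel r R \<rho> * I1 + 4 * M^2 * shell_kernel R d \<rho>"
    using ranges
  proof cases
    case 1 from near[OF 1] middle_nonneg far_nonneg(2) show ?thesis by linarith
  next
    case 2 from middle[OF 2] near_nonneg far_nonneg(2) show ?thesis by linarith
  next
    case 3 from far(2)[OF 3] near_nonneg middle_nonneg show ?thesis by linarith
  qed
qed

lemma segment_difference_bounds:
  fixes f :: "'a::real_inner \<Rightarrow> real" and g :: "'a \<Rightarrow> 'a"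
  assumes "convex U" and deriv: "\<And>z. z \<in> U \<Longrightarrow> (f has_derivative (\<lambda>k. g z \<bullet> k)) (at z)"
    and "continuous_on U g" and "x \<in> U" "y \<in> U"
  defines "\<gamma> \<equiv> \<lambda>t. g (x + t *\<^sub>R (y - x))"
  shows "continuous_on {0..1} \<gamma>"
    and "(f y - f x)^2 \<le> integral {0..1} (\<lambda>t. (\<gamma> t \<bullet> (y - x))^2)"
    and "\<bar>f y - f x\<bar> \<le> integral {0..1} (\<lambda>t. \<bar>\<gamma> t \<bullet> (y - x)\<bar>)"
    and "\<bar>f y - f x\<bar> \<le> integral {0..1} (\<lambda>t. norm (\<gamma> t) * norm (y - x))"
proof -
  show \<gamma>_continuous: "continuous_on {0..1} \<gamma>"
    unfolding \<gamma>_def using convexD_alt[OF \<open>convex U\<close> \<open>x \<in> U\<close> \<open>y \<in> U\<close>]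
    by (intro continuous_intros continuous_on_compose2[OF \<open>continuous_on U g\<close>]) (auto simp: algebra_simps)
  have ftc: "((\<lambda>t. \<gamma> t \<bullet> (y - x)) has_integral f y - f x) {0..1}"
    unfolding \<gamma>_def using assms by (intro has_integral_derivative_segment)
  show "(f y - f x)^2 \<le> integral {0..1} (\<lambda>t. (\<gamma> t \<bullet> (y - x))^2)"
    using \<gamma>_continuous
    by (intro square_le_integral_square_unit_interval[OF ftc] integrable_continuous_real continuous_intros)
  have abs_le: "\<bar>f y - f x\<bar> \<le> integral {0..1} \<phi>"
    if "continuous_on {0..1} \<phi>" "\<And>t. \<bar>\<gamma> t \<bullet> (y - x)\<bar> \<le> \<phi> t" for \<phi>
    using integral_norm_bound_integral[OF has_integral_integrable[OF ftc] integrable_continuous_real[OF that(1)]]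
      that(2)
    by (simp add: integral_unique[OF ftc])
  show "\<bar>f y - f x\<bar> \<le> integral {0..1} (\<lambda>t. \<bar>\<gamma> t \<bullet> (y - x)\<bar>)"
    by (rule abs_le) (auto intro!: continuous_intros \<gamma>_continuous)
  show "\<bar>f y - f x\<bar> \<le> integral {0..1} (\<lambda>t. norm (\<gamma> t) * norm (y - x))"
    by (rule abs_le) (auto intro!: continuous_intros \<gamma>_continuous simp: Cauchy_Schwarz_ineq2)
qed

lemma segment_kernel_bounds:
  fixes f :: "'a::real_inner \<Rightarrow> real" and g :: "'a \<Rightarrow> 'a"
  assumes "convex U" and deriv: "\<And>z. z \<in> U \<Longrightarrow> (f has_derivative (\<lambda>k. g z \<bullet> k)) (at z)"
    and "continuous_on U g" and f_bound: "\<And>z. z \<in> U \<Longrightarrow> \<bar>f z\<bar> \<le> M"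
    and "x \<in> U" "y \<in> U" "dist x y \<le> d" "0 < r" "r \<le> R"
  defines "h \<equiv> y - x"
  shows "ennreal ((f x - f y)^2 / dist x y ^ 3)
      \<le> (\<integral>\<^sup>+t\<in>{0..1}. ennreal (local_kernel M r R (g (x + t *\<^sub>R h)) h
            + 2 * M * shell_kernel R d (norm h) * (norm (g (x + t *\<^sub>R h)) * norm h)) \<partial>lborel)"
    and "ennreal ((f x - f y)^2 / dist x y ^ 3)
      \<le> (\<integral>\<^sup>+t\<in>{0..1}. ennreal (local_kernel M r R (g (x + t *\<^sub>R h)) h) \<partial>lborel)
        + ennreal (4 * M^2 * shell_kernel R d (norm h))"
proof -
  define \<gamma> where "\<gamma> t = g (x + t *\<^sub>R h)" for t
  note segment = segment_difference_bounds[OF \<open>convex U\<close> deriv \<open>continuous_on U g\<close> \<open>x \<in> U\<close> \<open>y \<in> U\<close>,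
      folded h_def, folded \<gamma>_def]
  define I2 where "I2 = integral {0..1} (\<lambda>t. (\<gamma> t \<bullet> h)^2)"
  define I1 where "I1 = integral {0..1} (\<lambda>t. \<bar>\<gamma> t \<bullet> h\<bar>)"
  define J where "J = integral {0..1} (\<lambda>t. norm (\<gamma> t) * norm h)"
  have I2: "((\<lambda>t. (\<gamma> t \<bullet> h)^2) has_integral I2) {0..1}"
    and I1: "((\<lambda>t. \<bar>\<gamma> t \<bullet> h\<bar>) has_integral I1) {0..1}"
    and J: "((\<lambda>t. norm (\<gamma> t) * norm h) has_integral J) {0..1}"
    unfolding I2_def I1_def J_def using segment(1)
    by (intro integrable_integral integrable_continuous_real continuous_intros; simp)+
  have "0 \<le> M" "0 \<le> R" "norm h \<le> d" "dist x y = norm h" "\<bar>f y - f x\<bar> \<le> 2 * M"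
    using f_bound[OF \<open>x \<in> U\<close>] f_bound[OF \<open>y \<in> U\<close>] \<open>0 < r\<close> \<open>r \<le> R\<close> \<open>dist x y \<le> d\<close>
    by (auto simp: h_def dist_norm norm_minus_commute)
  then have quotient:
    "(f x - f y)^2 / dist x y ^ 3
      \<le> shell_kernel 0 r (norm h) * I2 + 2 * M * shell_kernel r R (norm h) * I1
        + 2 * M * shell_kernel R d (norm h) * J"
    "(f x - f y)^2 / dist x y ^ 3
      \<le> shell_kernel 0 r (norm h) * I2 + 2 * M * shell_kernel r R (norm h) * I1 + 4 * M^2 * shell_kernel R d (norm h)"
    using difference_quotient_le_shell_kernels[of r R "norm h" d "f y - f x" M I2 I1 J] segment(2-4) \<open>0 < r\<close> \<open>r \<le> R\<close>
    by (simp_all add: power2_commute I2_def I1_def J_def)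
  have local: "((\<lambda>t. local_kernel M r R (\<gamma> t) h)
      has_integral shell_kernel 0 r (norm h) * I2 + 2 * M * shell_kernel r R (norm h) * I1) {0..1}"
    unfolding local_kernel_def by (intro has_integral_add has_integral_mult_right I2 I1)
  have "ennreal ((f x - f y)^2 / dist x y ^ 3)
      \<le> ennreal (shell_kernel 0 r (norm h) * I2 + 2 * M * shell_kernel r R (norm h) * I1
        + 2 * M * shell_kernel R d (norm h) * J)"
    using quotient(1) by (rule ennreal_leI)
  also have "\<dots> = (\<integral>\<^sup>+t\<in>{0..1}. ennreal (local_kernel M r R (\<gamma> t) h
      + 2 * M * shell_kernel R d (norm h) * (norm (\<gamma> t) * norm h)) \<partial>lborel)"
    using \<open>0 \<le> M\<close> \<open>0 < r\<close> \<open>0 \<le> R\<close>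
    by (intro nn_integral_has_integral_lebesgue'[symmetric] has_integral_add local has_integral_mult_right J)
      (auto simp: local_kernel_nonneg shell_kernel_nonneg)
  finally show "ennreal ((f x - f y)^2 / dist x y ^ 3)
      \<le> (\<integral>\<^sup>+t\<in>{0..1}. ennreal (local_kernel M r R (g (x + t *\<^sub>R h)) h
            + 2 * M * shell_kernel R d (norm h) * (norm (g (x + t *\<^sub>R h)) * norm h)) \<partial>lborel)"
    by (simp only: \<gamma>_def)
  have "ennreal ((f x - f y)^2 / dist x y ^ 3)
      \<le> ennreal (shell_kernel 0 r (norm h) * I2 + 2 * M * shell_kernel r R (norm h) * I1)
        + ennreal (4 * M^2 * shell_kernel R d (norm h))"
    using ennreal_leI[OF quotient(2)] \<open>0 \<le> M\<close> \<open>0 < r\<close> \<open>0 \<le> R\<close> has_integral_nonneg[OF local]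
    by (subst ennreal_plus[symmetric]) (auto simp: local_kernel_nonneg shell_kernel_nonneg)
  also have "ennreal (shell_kernel 0 r (norm h) * I2 + 2 * M * shell_kernel r R (norm h) * I1)
      = (\<integral>\<^sup>+t\<in>{0..1}. ennreal (local_kernel M r R (\<gamma> t) h) \<partial>lborel)"
    using \<open>0 \<le> M\<close> \<open>0 < r\<close>
    by (intro nn_integral_has_integral_lebesgue'[symmetric] local) (auto simp: local_kernel_nonneg)
  finally show "ennreal ((f x - f y)^2 / dist x y ^ 3)
      \<le> (\<integral>\<^sup>+t\<in>{0..1}. ennreal (local_kernel M r R (g (x + t *\<^sub>R h)) h) \<partial>lborel)
        + ennreal (4 * M^2 * shell_kernel R d (norm h))"
    by (simp only: \<gamma>_def)
qed

section \<open>Integrals of the kernels\<close>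

lemma nn_integral_near_kernel:
  fixes v :: "real^2"
  assumes "0 < r"
  shows "(\<integral>\<^sup>+h. ennreal (shell_kernel 0 r (norm h) * (v \<bullet> h)^2) \<partial>lborel) = ennreal (pi * r * norm v ^ 2)"
proof -
  have "(\<integral>\<^sup>+(h::real^2). ennreal (shell_kernel 0 r (norm h) * norm h ^ 2) \<partial>lborel)
      = (\<integral>\<^sup>+(h::real^2). ennreal (indicator {0..r} (norm h) * (norm h ^ 2 / norm h ^ 3)) \<partial>lborel)"
    by (simp add: shell_kernel_def)
  also have "\<dots> = ennreal (2 * pi * (r - 0))"
    using \<open>0 < r\<close> by (intro nn_integral_annulus_real2)
      (auto intro!: derivative_eq_intros continuous_intros simp: power2_eq_square power3_eq_cube)
  finally show ?thesis
    using \<open>0 < r\<close>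
    by (simp add: nn_integral_radial_mult_inner_square shell_kernel_nonneg ennreal_mult'[symmetric]
        del: ennreal_mult')
qed

lemma nn_integral_middle_kernel:
  fixes v :: "real^2"
  assumes "0 < r" "r \<le> R"
  shows "(\<integral>\<^sup>+h. ennreal (shell_kernel r R (norm h) * \<bar>v \<bullet> h\<bar>) \<partial>lborel) = ennreal (4 * norm v * ln (R / r))"
proof -
  have "(\<integral>\<^sup>+(h::real^2). ennreal (shell_kernel r R (norm h) * norm h) \<partial>lborel)
      = (\<integral>\<^sup>+(h::real^2). ennreal (indicator {r..R} (norm h) * (norm h / norm h ^ 3)) \<partial>lborel)"
    by (simp add: shell_kernel_def)
  also have "\<dots> = ennreal (2 * pi * (ln R - ln r))"
    using assms by (intro nn_integral_annulus_real2)
      (auto intro!: derivative_eq_intros continuous_intros simp: power3_eq_cube field_simps)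
  finally show ?thesis
    using assms
    by (simp add: nn_integral_radial_mult_abs_inner shell_kernel_nonneg ennreal_mult'[symmetric] ln_div
        del: ennreal_mult')
qed

lemma nn_integral_far_kernel_mult_norm:
  assumes "0 < R"
  shows "(\<integral>\<^sup>+(h::real^2). ennreal (shell_kernel R d (norm h) * norm h) \<partial>lborel)
    \<le> ennreal (2 * pi * (if R < d then 1 else 0) * d / R)"
proof (cases "R \<le> d")
  case True
  have "(\<integral>\<^sup>+(h::real^2). ennreal (shell_kernel R d (norm h) * norm h) \<partial>lborel)
      = (\<integral>\<^sup>+(h::real^2). ennreal (indicator {R..d} (norm h) * (norm h / norm h ^ 3)) \<partial>lborel)"
    by (simp add: shell_kernel_def)
  also have "\<dots> = ennreal (2 * pi * (ln d - ln R))"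
    using assms True by (intro nn_integral_annulus_real2)
      (auto intro!: derivative_eq_intros continuous_intros simp: power3_eq_cube field_simps)
  also have "\<dots> \<le> ennreal (2 * pi * (if R < d then 1 else 0) * d / R)"
  proof (intro ennreal_leI)
    have "ln d - ln R \<le> (if R < d then 1 else 0) * d / R"
      using assms True ln_le_minus_one[of "d / R"] by (auto simp: ln_div)
    from mult_left_mono[OF this, of "2 * pi"]
    show "2 * pi * (ln d - ln R) \<le> 2 * pi * (if R < d then 1 else 0) * d / R"
      by simp
  qed
  finally show ?thesis .
qed (simp add: shell_kernel_def)

lemma nn_integral_far_kernel:
  assumes "0 < R"
  shows "(\<integral>\<^sup>+(h::real^2). ennreal (shell_kernel R d (norm h)) \<partial>lborel)
    \<le> ennreal (2 * pi * (if R < d then 1 else 0) / R)"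
proof (cases "R \<le> d")
  case True
  have "(\<integral>\<^sup>+(h::real^2). ennreal (shell_kernel R d (norm h)) \<partial>lborel)
      = (\<integral>\<^sup>+(h::real^2). ennreal (indicator {R..d} (norm h) * (1 / norm h ^ 3)) \<partial>lborel)"
    by (simp add: shell_kernel_def)
  also have "\<dots> = ennreal (2 * pi * (- 1 / d - - 1 / R))"
    using assms True by (intro nn_integral_annulus_real2)
      (auto intro!: derivative_eq_intros continuous_intros simp: power2_eq_square power3_eq_cube field_simps)
  also have "\<dots> \<le> ennreal (2 * pi * (if R < d then 1 else 0) / R)"
    using assms True by (intro ennreal_leI) (auto simp: field_simps)
  finally show ?thesis .
qed (simp add: shell_kernel_def)

lemma nn_integral_local_kernel:
  fixes v :: "real^2"
  assumes "0 \<le> M" "0 < r" "r \<le> R"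
  shows "(\<integral>\<^sup>+h. ennreal (local_kernel M r R v h) \<partial>lborel)
    = ennreal (pi * r * norm v ^ 2) + ennreal (8 * M * ln (R / r) * norm v)"
proof -
  have "(\<integral>\<^sup>+h. ennreal (local_kernel M r R v h) \<partial>lborel)
      = (\<integral>\<^sup>+h. ennreal (shell_kernel 0 r (norm h) * (v \<bullet> h)^2)
          + ennreal (2 * M) * ennreal (shell_kernel r R (norm h) * \<bar>v \<bullet> h\<bar>) \<partial>lborel)"
    using assms
    by (intro nn_integral_cong) (simp add: local_kernel_def shell_kernel_nonneg ennreal_plus ennreal_mult mult.assoc)
  also have "\<dots> = ennreal (pi * r * norm v ^ 2) + ennreal (2 * M) * ennreal (4 * norm v * ln (R / r))"
    using assms by (simp add: nn_integral_add nn_integral_cmult nn_integral_near_kernel nn_integral_middle_kernel)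
  finally show ?thesis
    using assms by (simp add: ennreal_mult[symmetric])
qed

lemma nn_integral_local_far_kernel:
  fixes v :: "real^2"
  assumes "0 \<le> M" "0 < r" "r \<le> R"
  shows "(\<integral>\<^sup>+h. ennreal (local_kernel M r R v h + 2 * M * shell_kernel R d (norm h) * (norm v * norm h)) \<partial>lborel)
    \<le> ennreal (pi * r * norm v ^ 2)
      + ennreal ((8 * M * ln (R / r) + 4 * pi * M * (if R < d then 1 else 0) * d / R) * norm v)"
proof -
  have "0 < R" using assms by linarith
  have "(\<integral>\<^sup>+h. ennreal (local_kernel M r R v h + 2 * M * shell_kernel R d (norm h) * (norm v * norm h)) \<partial>lborel)
      = (\<integral>\<^sup>+h. ennreal (local_kernel M r R v h)
          + ennreal (2 * M * norm v) * ennreal (shell_kernel R d (norm h) * norm h) \<partial>lborel)"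
    using assms \<open>0 < R\<close>
    by (intro nn_integral_cong) (simp add: local_kernel_nonneg shell_kernel_nonneg ennreal_plus ennreal_mult mult_ac)
  also have "\<dots> = ennreal (pi * r * norm v ^ 2) + ennreal (8 * M * ln (R / r) * norm v)
      + ennreal (2 * M * norm v) * (\<integral>\<^sup>+(h::real^2). ennreal (shell_kernel R d (norm h) * norm h) \<partial>lborel)"
    using assms by (simp add: nn_integral_add nn_integral_cmult nn_integral_local_kernel)
  also have "\<dots> \<le> ennreal (pi * r * norm v ^ 2) + ennreal (8 * M * ln (R / r) * norm v)
      + ennreal (2 * M * norm v) * ennreal (2 * pi * (if R < d then 1 else 0) * d / R)"
    using nn_integral_far_kernel_mult_norm[OF \<open>0 < R\<close>] by (intro add_mono mult_left_mono) auto
  also have "ennreal (2 * M * norm v) * ennreal (2 * pi * (if R < d then 1 else 0) * d / R)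
      = ennreal (4 * pi * M * (if R < d then 1 else 0) * d / R * norm v)"
    using assms by (subst ennreal_mult'[symmetric]) (auto intro: arg_cong[where f=ennreal])
  also have "ennreal (pi * r * norm v ^ 2) + ennreal (8 * M * ln (R / r) * norm v) + \<dots>
      = ennreal (pi * r * norm v ^ 2)
        + ennreal ((8 * M * ln (R / r) + 4 * pi * M * (if R < d then 1 else 0) * d / R) * norm v)"
    using assms \<open>0 < R\<close> by (simp add: add.assoc distrib_right ennreal_plus)
  finally show ?thesis .
qed

section \<open>From pairs of points to segments\<close>

lemma nn_integral_lborel_translate:
  fixes \<phi> :: "'a::euclidean_space \<Rightarrow> ennreal"
  assumes [measurable]: "\<phi> \<in> borel_measurable borel"
  shows "(\<integral>\<^sup>+y. \<phi> (y + c) \<partial>lborel) = (\<integral>\<^sup>+h. \<phi> h \<partial>lborel)"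
proof -
  have "(\<integral>\<^sup>+h. \<phi> h \<partial>lborel) = (\<integral>\<^sup>+h. \<phi> h \<partial>distr lborel borel ((+) c))"
    by (simp add: lborel_distr_plus)
  also have "\<dots> = (\<integral>\<^sup>+y. \<phi> (y + c) \<partial>lborel)"
    by (subst nn_integral_distr) (auto simp: add.commute)
  finally show ?thesis ..
qed

lemma nn_integral_pairs_le_segment_integral:
  fixes P :: "'a::euclidean_space \<Rightarrow> 'a \<Rightarrow> ennreal" and Y :: "'a \<Rightarrow> ennreal" and W :: "'a \<Rightarrow> 'a \<Rightarrow> ennreal"
  assumes P: "(\<lambda>(z, h). P z h) \<in> borel_measurable borel"
    and [measurable]: "Y \<in> borel_measurable borel" "U \<in> sets borel"
    and W: "\<And>x y. x \<in> U \<Longrightarrow> y \<in> U \<Longrightarrow> W x y \<le> (\<integral>\<^sup>+t\<in>{0..1}. P (x + t *\<^sub>R (y - x)) (y - x) \<partial>lborel) + Y (y - x)"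
  shows "(\<integral>\<^sup>+x\<in>U. (\<integral>\<^sup>+y\<in>U. W x y \<partial>lborel) \<partial>lborel)
    \<le> (\<integral>\<^sup>+z. (\<integral>\<^sup>+h. P z h \<partial>lborel) \<partial>lborel) + emeasure lborel U * (\<integral>\<^sup>+h. Y h \<partial>lborel)"
proof -
  have [measurable (raw)]: "(\<lambda>w. P (a w) (b w)) \<in> borel_measurable M"
    if "a \<in> borel_measurable M" "b \<in> borel_measurable M" for a b :: "'b \<Rightarrow> 'a" and M
    using measurable_compose[OF measurable_Pair[OF that] P[unfolded borel_prod[symmetric]]] by simp
  define Q where "Q x h = (\<integral>\<^sup>+t\<in>{0..1}. P (x + t *\<^sub>R h) h \<partial>lborel)" for x h
  have Q_lborel: "(\<lambda>(x, h). Q x h) \<in> borel_measurable (lborel \<Otimes>\<^sub>M lborel)"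
    unfolding Q_def by measurable
  then have Q: "(\<lambda>(x, h). Q x h) \<in> borel_measurable (borel \<Otimes>\<^sub>M borel)"
    by (simp cong: measurable_cong_sets[OF sets_pair_measure_cong[OF sets_lborel sets_lborel] refl])
  have [measurable (raw)]: "(\<lambda>w. Q (a w) (b w)) \<in> borel_measurable M"
    if "a \<in> borel_measurable M" "b \<in> borel_measurable M" for a b :: "'b \<Rightarrow> 'a" and M
    using measurable_compose[OF measurable_Pair[OF that] Q] by simp
  have Q_integral: "(\<integral>\<^sup>+x. Q x h \<partial>lborel) = (\<integral>\<^sup>+z. P z h \<partial>lborel)" for h
  proof -
    have "(\<integral>\<^sup>+x. Q x h \<partial>lborel) = (\<integral>\<^sup>+t\<in>{0..1}. (\<integral>\<^sup>+x. P (x + t *\<^sub>R h) h \<partial>lborel) \<partial>lborel)"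
      unfolding Q_def by (subst lborel_pair.Fubini') (auto simp: nn_integral_multc)
    also have "\<dots> = (\<integral>\<^sup>+t\<in>{0..1::real}. (\<integral>\<^sup>+z. P z h \<partial>lborel) \<partial>lborel)"
      using nn_integral_lborel_translate[of "\<lambda>z. P z h"] by simp
    also have "\<dots> = (\<integral>\<^sup>+z. P z h \<partial>lborel)"
      by (subst nn_integral_cmult_indicator) auto
    finally show ?thesis .
  qed
  have "(\<integral>\<^sup>+y\<in>U. W x y \<partial>lborel) \<le> (\<integral>\<^sup>+y. Q x (y - x) + Y (y - x) \<partial>lborel)" if "x \<in> U" for x
    using W that by (intro nn_integral_mono) (auto simp: Q_def split: split_indicator)
  then have "(\<integral>\<^sup>+x\<in>U. (\<integral>\<^sup>+y\<in>U. W x y \<partial>lborel) \<partial>lborel) \<le> (\<integral>\<^sup>+x\<in>U. (\<integral>\<^sup>+y. Q x (y - x) + Y (y - x) \<partial>lborel) \<partial>lborel)"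
    by (intro nn_integral_mono) (auto split: split_indicator)
  also have "\<dots> = (\<integral>\<^sup>+x\<in>U. (\<integral>\<^sup>+h. Q x h \<partial>lborel) + (\<integral>\<^sup>+h. Y h \<partial>lborel) \<partial>lborel)"
    using nn_integral_lborel_translate[of "Q _" "- _"] nn_integral_lborel_translate[of Y "- _"]
    by (simp add: nn_integral_add)
  also have "\<dots> \<le> (\<integral>\<^sup>+x. (\<integral>\<^sup>+h. Q x h \<partial>lborel) + (\<integral>\<^sup>+h. Y h \<partial>lborel) * indicator U x \<partial>lborel)"
    by (intro nn_integral_mono) (auto split: split_indicator)
  also have "\<dots> = (\<integral>\<^sup>+x. (\<integral>\<^sup>+h. Q x h \<partial>lborel) \<partial>lborel) + (\<integral>\<^sup>+h. Y h \<partial>lborel) * emeasure lborel U"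
    by (subst nn_integral_add) (auto simp: nn_integral_cmult_indicator)
  also have "(\<integral>\<^sup>+x. (\<integral>\<^sup>+h. Q x h \<partial>lborel) \<partial>lborel) = (\<integral>\<^sup>+h. (\<integral>\<^sup>+x. Q x h \<partial>lborel) \<partial>lborel)"
    using Q_lborel by (rule lborel_pair.Fubini'[symmetric])
  also have "\<dots> = (\<integral>\<^sup>+h. (\<integral>\<^sup>+z. P z h \<partial>lborel) \<partial>lborel)"
    by (simp add: Q_integral)
  also have "\<dots> = (\<integral>\<^sup>+z. (\<integral>\<^sup>+h. P z h \<partial>lborel) \<partial>lborel)"
    by (rule lborel_pair.Fubini') measurable
  finally show ?thesis
    by (simp add: mult.commute)
qed

lemma nn_integral_difference_quotient_le_gradient:
  fixes U :: "(real^2) set" and f :: "real^2 \<Rightarrow> real" and g :: "real^2 \<Rightarrow> real^2"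
  assumes "convex U" and [measurable]: "U \<in> sets borel"
    and deriv: "\<And>z. z \<in> U \<Longrightarrow> (f has_derivative (\<lambda>k. g z \<bullet> k)) (at z)"
    and "continuous_on U g" and [measurable]: "g \<in> borel_measurable borel"
    and f_bound: "\<And>z. z \<in> U \<Longrightarrow> \<bar>f z\<bar> \<le> M" and "0 \<le> M"
    and diam: "\<And>x y. x \<in> U \<Longrightarrow> y \<in> U \<Longrightarrow> dist x y \<le> d" and "0 < r" "r \<le> R"
  defines "C \<equiv> 8 * M * ln (R / r) + 4 * pi * M * (if R < d then 1 else 0) * d / R"
  shows "(\<integral>\<^sup>+x\<in>U. (\<integral>\<^sup>+y\<in>U. ennreal ((f x - f y)^2 / dist x y ^ 3) \<partial>lborel) \<partial>lborel)
      \<le> ennreal (pi * r) * (\<integral>\<^sup>+z. ennreal (norm (g z) ^ 2) \<partial>lborel)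
        + ennreal C * (\<integral>\<^sup>+z. ennreal (norm (g z)) \<partial>lborel)"
proof -
  have "0 \<le> C"
    using \<open>0 \<le> M\<close> \<open>0 < r\<close> \<open>r \<le> R\<close> by (simp add: C_def mult.assoc)
  have "(\<lambda>(z, h). ennreal (local_kernel M r R (g z) h + 2 * M * shell_kernel R d (norm h) * (norm (g z) * norm h)))
      \<in> borel_measurable borel"
    unfolding borel_prod[symmetric] by measurable
  then have "(\<integral>\<^sup>+x\<in>U. (\<integral>\<^sup>+y\<in>U. ennreal ((f x - f y)^2 / dist x y ^ 3) \<partial>lborel) \<partial>lborel)
      \<le> (\<integral>\<^sup>+z. (\<integral>\<^sup>+h. ennreal (local_kernel M r R (g z) h
            + 2 * M * shell_kernel R d (norm h) * (norm (g z) * norm h)) \<partial>lborel) \<partial>lborel)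
        + emeasure lborel U * (\<integral>\<^sup>+(h::real^2). 0 \<partial>lborel)"
    by (rule nn_integral_pairs_le_segment_integral)
      (use segment_kernel_bounds(1)[OF \<open>convex U\<close> deriv \<open>continuous_on U g\<close> f_bound _ _ diam \<open>0 < r\<close> \<open>r \<le> R\<close>] in auto)
  also have "\<dots> \<le> (\<integral>\<^sup>+z. ennreal (pi * r * norm (g z) ^ 2) + ennreal (C * norm (g z)) \<partial>lborel)"
    using \<open>0 \<le> M\<close> \<open>0 < r\<close> \<open>r \<le> R\<close> by (simp add: C_def nn_integral_mono nn_integral_local_far_kernel)
  also have "\<dots> = ennreal (pi * r) * (\<integral>\<^sup>+z. ennreal (norm (g z) ^ 2) \<partial>lborel)
      + ennreal C * (\<integral>\<^sup>+z. ennreal (norm (g z)) \<partial>lborel)"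
    using \<open>0 < r\<close> \<open>0 \<le> C\<close> by (simp add: nn_integral_add nn_integral_cmult ennreal_mult)
  finally show ?thesis .
qed

lemma nn_integral_difference_quotient_le_sup:
  fixes U :: "(real^2) set" and f :: "real^2 \<Rightarrow> real" and g :: "real^2 \<Rightarrow> real^2"
  assumes "convex U" and [measurable]: "U \<in> sets borel"
    and deriv: "\<And>z. z \<in> U \<Longrightarrow> (f has_derivative (\<lambda>k. g z \<bullet> k)) (at z)"
    and "continuous_on U g" and [measurable]: "g \<in> borel_measurable borel"
    and f_bound: "\<And>z. z \<in> U \<Longrightarrow> \<bar>f z\<bar> \<le> M" and "0 \<le> M"
    and diam: "\<And>x y. x \<in> U \<Longrightarrow> y \<in> U \<Longrightarrow> dist x y \<le> d" and "0 < r" "r \<le> R"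
  shows "(\<integral>\<^sup>+x\<in>U. (\<integral>\<^sup>+y\<in>U. ennreal ((f x - f y)^2 / dist x y ^ 3) \<partial>lborel) \<partial>lborel)
      \<le> ennreal (pi * r) * (\<integral>\<^sup>+z. ennreal (norm (g z) ^ 2) \<partial>lborel)
        + ennreal (8 * M * ln (R / r)) * (\<integral>\<^sup>+z. ennreal (norm (g z)) \<partial>lborel)
        + emeasure lborel U * ennreal (8 * pi * M^2 * (if R < d then 1 else 0) / R)"
proof -
  have "0 < R" "0 \<le> ln (R / r)"
    using \<open>0 < r\<close> \<open>r \<le> R\<close> by auto
  have "(\<lambda>(z, h). ennreal (local_kernel M r R (g z) h)) \<in> borel_measurable borel"
    unfolding borel_prod[symmetric] by measurable
  then have "(\<integral>\<^sup>+x\<in>U. (\<integral>\<^sup>+y\<in>U. ennreal ((f x - f y)^2 / dist x y ^ 3) \<partial>lborel) \<partial>lborel)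
      \<le> (\<integral>\<^sup>+z. (\<integral>\<^sup>+h. ennreal (local_kernel M r R (g z) h) \<partial>lborel) \<partial>lborel)
        + emeasure lborel U * (\<integral>\<^sup>+(h::real^2). ennreal (4 * M^2 * shell_kernel R d (norm h)) \<partial>lborel)"
    by (rule nn_integral_pairs_le_segment_integral)
      (use segment_kernel_bounds(2)[OF \<open>convex U\<close> deriv \<open>continuous_on U g\<close> f_bound _ _ diam \<open>0 < r\<close> \<open>r \<le> R\<close>] in auto)
  also have "\<dots> \<le> (\<integral>\<^sup>+z. ennreal (pi * r * norm (g z) ^ 2) + ennreal (8 * M * ln (R / r) * norm (g z)) \<partial>lborel)
        + emeasure lborel U * (ennreal (4 * M^2) * ennreal (2 * pi * (if R < d then 1 else 0) / R))"
    using \<open>0 \<le> M\<close> \<open>0 < r\<close> \<open>r \<le> R\<close> nn_integral_far_kernel[OF \<open>0 < R\<close>, of d]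
    by (intro add_mono mult_left_mono)
      (auto simp: nn_integral_local_kernel nn_integral_cmult ennreal_mult' intro!: mult_left_mono)
  also have "ennreal (4 * M^2) * ennreal (2 * pi * (if R < d then 1 else 0) / R)
      = ennreal (8 * pi * M^2 * (if R < d then 1 else 0) / R)"
    using \<open>0 < R\<close> by (subst ennreal_mult[symmetric]) (auto intro: arg_cong[where f=ennreal])
  also have "(\<integral>\<^sup>+z. ennreal (pi * r * norm (g z) ^ 2) + ennreal (8 * M * ln (R / r) * norm (g z)) \<partial>lborel)
      = ennreal (pi * r) * (\<integral>\<^sup>+z. ennreal (norm (g z) ^ 2) \<partial>lborel)
        + ennreal (8 * M * ln (R / r)) * (\<integral>\<^sup>+z. ennreal (norm (g z)) \<partial>lborel)"
    using \<open>0 < r\<close> \<open>0 \<le> M\<close> \<open>0 \<le> ln (R / r)\<close> by (simp add: nn_integral_add nn_integral_cmult ennreal_mult)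
  finally show ?thesis .
qed

section \<open>Bounded convex domains\<close>

lemma ennreal_integral_le_nn_integral:
  fixes \<phi> :: "'a \<Rightarrow> real"
  assumes "\<And>x. 0 \<le> \<phi> x"
  shows "ennreal (integral\<^sup>L M \<phi>) \<le> (\<integral>\<^sup>+x. ennreal (\<phi> x) \<partial>M)"
proof (cases "integrable M \<phi>")
  case True
  then show ?thesis using assms by (simp add: nn_integral_eq_integral)
qed (simp add: not_integrable_integral_eq)

lemma AE_in_iff_in_interior_convex:
  fixes S :: "'a::euclidean_space set"
  assumes "convex S"
  shows "AE x in lebesgue. x \<in> S \<longleftrightarrow> x \<in> interior S"
proof -
  have "AE x in lebesgue. x \<notin> frontier S"
    using negligible_convex_frontier[OF assms] by (intro AE_not_in) (simp add: negligible_iff_null_sets)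
  then show ?thesis
    by eventually_elim (use closure_subset interior_subset in \<open>auto simp: frontier_def\<close>)
qed

lemma ennreal_set_integral_le_nn_integral_interior:
  fixes F :: "'a::euclidean_space \<Rightarrow> real" and H :: "'a \<Rightarrow> ennreal"
  assumes "convex \<Omega>" and F_nonneg: "\<And>x. x \<in> \<Omega> \<Longrightarrow> 0 \<le> F x"
    and F_le: "\<And>x. x \<in> interior \<Omega> \<Longrightarrow> ennreal (F x) \<le> H x"
  shows "ennreal (LINT x:\<Omega>|lebesgue. F x) \<le> (\<integral>\<^sup>+x\<in>interior \<Omega>. H x \<partial>lborel)"
proof -
  have "ennreal (LINT x:\<Omega>|lebesgue. F x) \<le> (\<integral>\<^sup>+x. ennreal (indicator \<Omega> x *\<^sub>R F x) \<partial>lebesgue)"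
    unfolding set_lebesgue_integral_def using F_nonneg
    by (intro ennreal_integral_le_nn_integral) (simp add: indicator_def)
  also have "\<dots> \<le> (\<integral>\<^sup>+x\<in>interior \<Omega>. H x \<partial>lebesgue)"
  proof (rule nn_integral_mono_AE)
    show "AE x in lebesgue. ennreal (indicator \<Omega> x *\<^sub>R F x) \<le> H x * indicator (interior \<Omega>) x"
      using AE_in_iff_in_interior_convex[OF \<open>convex \<Omega>\<close>]
      by eventually_elim (use F_le in \<open>auto split: split_indicator\<close>)
  qed
  also have "\<dots> = (\<integral>\<^sup>+x\<in>interior \<Omega>. H x \<partial>lborel)"
    by (rule nn_integral_completion)
  finally show ?thesis .
qed

lemma emeasure_interior_convex:
  fixes \<Omega> :: "'a::euclidean_space set"
  assumes "convex \<Omega>" "bounded \<Omega>"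
  shows "emeasure lborel (interior \<Omega>) = ennreal (measure lebesgue \<Omega>)"
proof -
  have "emeasure lborel (interior \<Omega>) = emeasure lebesgue (interior \<Omega>)"
    by simp
  also have "\<dots> = emeasure lebesgue \<Omega>"
    using AE_in_iff_in_interior_convex[OF \<open>convex \<Omega>\<close>] measurable_convex[OF assms]
    by (intro emeasure_eq_AE) auto
  also have "\<dots> = ennreal (measure lebesgue \<Omega>)"
    using measurable_convex[OF assms] by (simp add: emeasure_eq_measure2)
  finally show ?thesis .
qed

lemma ennreal_set_integral_eq_nn_integral_interior:
  fixes F G :: "'a::euclidean_space \<Rightarrow> real"
  assumes "convex \<Omega>" "bounded \<Omega>" and [measurable]: "G \<in> borel_measurable borel"
    and G_F: "\<And>x. x \<in> interior \<Omega> \<Longrightarrow> G x = F x" and G_zero: "\<And>x. x \<notin> interior \<Omega> \<Longrightarrow> G x = 0"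
    and G_nonneg: "\<And>x. 0 \<le> G x" and G_le: "\<And>x. x \<in> interior \<Omega> \<Longrightarrow> G x \<le> B"
  shows "ennreal (LINT x:\<Omega>|lebesgue. F x) = (\<integral>\<^sup>+x. ennreal (G x) \<partial>lborel)"
proof -
  have "integrable lborel G"
  proof (rule integrableI_bounded_set[where A="interior \<Omega>" and B=B])
    show "emeasure lborel (interior \<Omega>) < \<infinity>"
      using emeasure_interior_convex[OF assms(1,2)] by simp
  qed (use G_nonneg G_le G_zero in auto)
  have AE_G: "AE x in lebesgue. indicator \<Omega> x *\<^sub>R F x = G x"
    using AE_in_iff_in_interior_convex[OF \<open>convex \<Omega>\<close>]
    by eventually_elim (use G_F G_zero in \<open>auto split: split_indicator\<close>)
  have G_lebesgue: "G \<in> borel_measurable lebesgue"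
    by (rule measurable_completion) simp
  have "(LINT x:\<Omega>|lebesgue. F x) = integral\<^sup>L lebesgue G"
    unfolding set_lebesgue_integral_def
    using borel_measurable_AE[OF G_lebesgue AE_symmetric[OF AE_G]] G_lebesgue AE_G
    by (rule integral_cong_AE)
  also have "\<dots> = integral\<^sup>L lborel G"
    by (rule integral_completion) simp
  also have "ennreal \<dots> = (\<integral>\<^sup>+x. ennreal (G x) \<partial>lborel)"
    using \<open>integrable lborel G\<close> G_nonneg by (intro nn_integral_eq_integral[symmetric]) auto
  finally show ?thesis .
qed

lemma ennreal_double_set_integral_le_nn_integral_interior:
  fixes F :: "'a::euclidean_space \<Rightarrow> 'a \<Rightarrow> real"
  assumes "convex \<Omega>" and F_nonneg: "\<And>x y. 0 \<le> F x y"
  shows "ennreal (LINT x:\<Omega>|lebesgue. LINT y:\<Omega>|lebesgue. F x y)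
    \<le> (\<integral>\<^sup>+x\<in>interior \<Omega>. (\<integral>\<^sup>+y\<in>interior \<Omega>. ennreal (F x y) \<partial>lborel) \<partial>lborel)"
  using \<open>convex \<Omega>\<close>
proof (rule ennreal_set_integral_le_nn_integral_interior)
  show "0 \<le> (LINT y:\<Omega>|lebesgue. F x y)" for x
    unfolding set_lebesgue_integral_def using F_nonneg by (auto intro!: Bochner_Integration.integral_nonneg)
  show "ennreal (LINT y:\<Omega>|lebesgue. F x y) \<le> (\<integral>\<^sup>+y\<in>interior \<Omega>. ennreal (F x y) \<partial>lborel)" for x
    using \<open>convex \<Omega>\<close> F_nonneg by (rule ennreal_set_integral_le_nn_integral_interior) auto
qed

lemma gagliardo_half_seminorm_bounds:
  fixes \<Omega> :: "(real^2) set" and f :: "real^2 \<Rightarrow> real" and g :: "real^2 \<Rightarrow> real^2"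
  assumes "convex \<Omega>" "bounded \<Omega>"
    and deriv: "\<And>z. z \<in> interior \<Omega> \<Longrightarrow> (f has_derivative (\<lambda>k. g z \<bullet> k)) (at z)"
    and g_continuous: "continuous_on (interior \<Omega>) g" and g_bound: "\<And>z. z \<in> interior \<Omega> \<Longrightarrow> norm (g z) \<le> B"
    and f_bound: "\<And>x. x \<in> \<Omega> \<Longrightarrow> \<bar>f x\<bar> \<le> M" and "0 \<le> M" and "0 < r" "r \<le> R"
  defines "LHS \<equiv> (LINT x:\<Omega>|lebesgue. LINT y:\<Omega>|lebesgue. (f x - f y)^2 / (dist x y)^3)"
    and "A \<equiv> pi * r * (LINT x:\<Omega>|lebesgue. (norm (g x))^2) + 8 * ln (R / r) * M * (LINT x:\<Omega>|lebesgue. norm (g x))"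
    and "c \<equiv> 4 * pi * (if R < diameter \<Omega> then 1 else 0) / R * M"
  shows "LHS \<le> A + c * (diameter \<Omega> * (LINT x:\<Omega>|lebesgue. norm (g x)))"
    and "LHS \<le> A + c * (2 * measure lebesgue \<Omega> * M)"
proof -
  define a2 where "a2 = (LINT x:\<Omega>|lebesgue. (norm (g x))^2)"
  define a1 where "a1 = (LINT x:\<Omega>|lebesgue. norm (g x))"
  define \<delta> where "\<delta> = diameter \<Omega>"
  define G where "G z = indicator (interior \<Omega>) z *\<^sub>R g z" for z
  have [measurable]: "G \<in> borel_measurable borel"
    unfolding G_def using g_continuous by (intro borel_measurable_continuous_on_indicator) auto
  have G_continuous: "continuous_on (interior \<Omega>) G"
    using g_continuous by (rule continuous_on_eq) (simp add: G_def)
  have G_derivative: "(f has_derivative (\<lambda>k. G z \<bullet> k)) (at z)" if "z \<in> interior \<Omega>" for z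
    using deriv[OF that] that by (simp add: G_def)
  have norm_G: "(\<lambda>z. norm (G z)) \<in> borel_measurable borel"
    using measurable_compose[OF \<open>G \<in> borel_measurable borel\<close> borel_measurable_norm] by (simp add: o_def)
  have a2: "ennreal a2 = (\<integral>\<^sup>+z. ennreal (norm (G z) ^ 2) \<partial>lborel)"
    unfolding a2_def using borel_measurable_power[OF norm_G] g_bound
    by (intro ennreal_set_integral_eq_nn_integral_interior[where B="B^2", OF \<open>convex \<Omega>\<close> \<open>bounded \<Omega>\<close>])
      (auto simp: G_def intro: power_mono)
  have a1: "ennreal a1 = (\<integral>\<^sup>+z. ennreal (norm (G z)) \<partial>lborel)"
    unfolding a1_def using norm_G g_bound
    by (intro ennreal_set_integral_eq_nn_integral_interior[where B=B, OF \<open>convex \<Omega>\<close> \<open>bounded \<Omega>\<close>])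
      (auto simp: G_def)
  have lhs: "ennreal LHS
      \<le> (\<integral>\<^sup>+x\<in>interior \<Omega>. (\<integral>\<^sup>+y\<in>interior \<Omega>. ennreal ((f x - f y)^2 / dist x y ^ 3) \<partial>lborel) \<partial>lborel)"
    unfolding LHS_def by (rule ennreal_double_set_integral_le_nn_integral_interior[OF \<open>convex \<Omega>\<close>]) simp
  have "dist x y \<le> \<delta>" if "x \<in> interior \<Omega>" "y \<in> interior \<Omega>" for x y
    unfolding \<delta>_def using \<open>bounded \<Omega>\<close> that interior_subset by (blast intro: diameter_bounded_bound)
  note segment_assms = convex_interior[OF \<open>convex \<Omega>\<close>] borel_open[OF open_interior] G_derivative G_continuous
    \<open>G \<in> borel_measurable borel\<close> f_bound[OF interior_subset[THEN subsetD]] \<open>0 \<le> M\<close> this \<open>0 < r\<close> \<open>r \<le> R\<close>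
  have "0 \<le> a2" "0 \<le> a1" "0 \<le> c" "0 \<le> c * \<delta>" "0 \<le> ln (R / r)"
    unfolding a2_def a1_def set_lebesgue_integral_def c_def \<delta>_def using \<open>0 \<le> M\<close> \<open>0 < r\<close> \<open>r \<le> R\<close>
    by (auto intro!: Bochner_Integration.integral_nonneg)
  have "ennreal LHS \<le> ennreal (pi * r * a2 + (8 * M * ln (R / r) + c * \<delta>) * a1)"
  proof -
    have "8 * M * ln (R / r) + 4 * pi * M * (if R < \<delta> then 1 else 0) * \<delta> / R = 8 * M * ln (R / r) + c * \<delta>"
      by (simp add: c_def \<delta>_def)
    then show ?thesis
      using order_trans[OF lhs nn_integral_difference_quotient_le_gradient[OF segment_assms, folded a2 a1]]
        \<open>0 < r\<close> \<open>0 \<le> a2\<close> \<open>0 \<le> a1\<close> \<open>0 \<le> c * \<delta>\<close> \<open>0 \<le> M\<close> \<open>0 \<le> ln (R / r)\<close>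
      by (simp add: ennreal_plus ennreal_mult')
  qed
  moreover have "0 \<le> pi * r * a2 + (8 * M * ln (R / r) + c * \<delta>) * a1"
    using \<open>0 < r\<close> \<open>0 \<le> a2\<close> \<open>0 \<le> a1\<close> \<open>0 \<le> c * \<delta>\<close> \<open>0 \<le> M\<close> \<open>0 \<le> ln (R / r)\<close> by simp
  ultimately show "LHS \<le> A + c * (diameter \<Omega> * (LINT x:\<Omega>|lebesgue. norm (g x)))"
    unfolding A_def a2_def[symmetric] a1_def[symmetric] \<delta>_def[symmetric] by (simp add: ennreal_le_iff algebra_simps)
  have "ennreal LHS \<le> ennreal (pi * r * a2 + 8 * M * ln (R / r) * a1 + measure lebesgue \<Omega> * (c * (2 * M)))"
  proof -
    have "ennreal (measure lebesgue \<Omega>) * ennreal (8 * pi * M^2 * (if R < \<delta> then 1 else 0) / R)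
        = ennreal (measure lebesgue \<Omega> * (c * (2 * M)))"
      by (subst ennreal_mult'[symmetric]) (simp_all add: c_def \<delta>_def power2_eq_square mult_ac)
    then show ?thesis
      using order_trans[OF lhs nn_integral_difference_quotient_le_sup[OF segment_assms, folded a2 a1,
          unfolded emeasure_interior_convex[OF \<open>convex \<Omega>\<close> \<open>bounded \<Omega>\<close>]]]
        \<open>0 < r\<close> \<open>0 \<le> a2\<close> \<open>0 \<le> a1\<close> \<open>0 \<le> c\<close> \<open>0 \<le> M\<close> \<open>0 \<le> ln (R / r)\<close>
      by (simp add: ennreal_plus ennreal_mult' del: times_divide_eq_right)
  qed
  moreover have "0 \<le> pi * r * a2 + 8 * M * ln (R / r) * a1 + measure lebesgue \<Omega> * (c * (2 * M))"
    using \<open>0 < r\<close> \<open>0 \<le> a2\<close> \<open>0 \<le> a1\<close> \<open>0 \<le> c\<close> \<open>0 \<le> M\<close> \<open>0 \<le> ln (R / r)\<close> by simp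
  ultimately show "LHS \<le> A + c * (2 * measure lebesgue \<Omega> * M)"
    unfolding A_def a2_def[symmetric] a1_def[symmetric] by (simp add: ennreal_le_iff algebra_simps)
qed

lemma grad_eq_of_has_derivative:
  assumes "(f has_derivative (\<lambda>k. v \<bullet> k)) (at z)"
  shows "grad f z = v"
proof -
  have "frechet_derivative f (at z) = (\<lambda>k. v \<bullet> k)"
    using frechet_derivative_at[OF assms] by simp
  then show ?thesis
    by (simp add: grad_def vec_eq_iff inner_axis)
qed

lemma smooth_on_closure_gradient:
  assumes "smooth_on_closure f \<Omega>" "bounded \<Omega>"
  shows "\<And>z. z \<in> interior \<Omega> \<Longrightarrow> (f has_derivative (\<lambda>k. grad f z \<bullet> k)) (at z)"
    and "continuous_on (interior \<Omega>) (grad f)"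
    and "\<exists>B. \<forall>z\<in>interior \<Omega>. norm (grad f z) \<le> B"
    and "bounded (f ` \<Omega>)"
proof -
  from assms(1) obtain D where D_f: "\<forall>x\<in>closure \<Omega>. D [] x = f x"
    and D_continuous: "\<forall>is. continuous_on (closure \<Omega>) (D is)"
    and D_derivative: "\<forall>is. \<forall>x\<in>interior \<Omega>. (D is has_derivative (\<lambda>h. \<Sum>i\<in>UNIV. h $ i * D (i # is) x)) (at x)"
    unfolding smooth_on_closure_def by blast
  define g where "g z = (\<chi> i. D [i] z)" for z
  have "continuous_on (closure \<Omega>) g"
    unfolding g_def using D_continuous by (intro continuous_on_vec_lambda) blast
  have f_derivative: "(f has_derivative (\<lambda>k. g z \<bullet> k)) (at z)" if "z \<in> interior \<Omega>" for z
  proof -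
    have "(D [] has_derivative (\<lambda>k. g z \<bullet> k)) (at z)"
      using D_derivative that by (simp add: g_def inner_vec_def mult.commute)
    then show ?thesis
      by (rule has_derivative_transform_within_open[OF _ open_interior that])
        (use D_f interior_subset closure_subset in blast)
  qed
  then have grad_g: "grad f z = g z" if "z \<in> interior \<Omega>" for z
    using that by (simp add: grad_eq_of_has_derivative)
  show "(f has_derivative (\<lambda>k. grad f z \<bullet> k)) (at z)" if "z \<in> interior \<Omega>" for z
    using f_derivative[OF that] grad_g[OF that] by simp
  show "continuous_on (interior \<Omega>) (grad f)"
    using continuous_on_subset[OF \<open>continuous_on (closure \<Omega>) g\<close> order_trans[OF interior_subset closure_subset]]
    by (rule continuous_on_eq) (simp add: grad_g)
  have "continuous_on (closure \<Omega>) f"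
    using D_continuous by (rule continuous_on_eq[OF spec[of _ "[]"]]) (use D_f in simp)
  then have "bounded (f ` closure \<Omega>)" "bounded (g ` closure \<Omega>)"
    using \<open>continuous_on (closure \<Omega>) g\<close> \<open>bounded \<Omega>\<close>
    by (auto intro!: compact_imp_bounded compact_continuous_image simp: compact_closure)
  show "bounded (f ` \<Omega>)"
    using \<open>bounded (f ` closure \<Omega>)\<close> by (rule bounded_subset) (intro image_mono closure_subset)
  from \<open>bounded (g ` closure \<Omega>)\<close> obtain B where "\<forall>z\<in>closure \<Omega>. norm (g z) \<le> B"
    by (auto simp: bounded_iff)
  then have "norm (grad f z) \<le> B" if "z \<in> interior \<Omega>" for z
    using that grad_g[OF that] interior_subset[of \<Omega>] closure_subset[of \<Omega>] by auto
  then show "\<exists>B. \<forall>z\<in>interior \<Omega>. norm (grad f z) \<le> B"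
    by blast
qed

theorem lemma3p1:
  fixes \<Omega> :: "(real^2) set" and f :: "real^2 \<Rightarrow> real" and r R :: real
  assumes "bounded \<Omega>" and "convex \<Omega>"
    and "smooth_on_closure f \<Omega>"
    and "0 < r" and "r \<le> R"
  shows "(LINT x:\<Omega>|lebesgue. LINT y:\<Omega>|lebesgue. (f x - f y)^2 / (dist x y)^3)
     \<le> pi * r * (LINT x:\<Omega>|lebesgue. (norm (grad f x))^2)
       + 8 * ln (R / r) * sup_norm_on f \<Omega> * (LINT x:\<Omega>|lebesgue. norm (grad f x))
       + 4 * pi * (if R < diameter \<Omega> then 1 else 0) / R * sup_norm_on f \<Omega>
           * min (diameter \<Omega> * (LINT x:\<Omega>|lebesgue. norm (grad f x)))
                 (2 * measure lebesgue \<Omega> * sup_norm_on f \<Omega>)"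
proof (cases "\<Omega> = {}")
  case False
  note gradient = smooth_on_closure_gradient[OF \<open>smooth_on_closure f \<Omega>\<close> \<open>bounded \<Omega>\<close>]
  obtain B where B: "\<And>z. z \<in> interior \<Omega> \<Longrightarrow> norm (grad f z) \<le> B"
    using gradient(3) by blast
  have "bdd_above ((\<lambda>x. \<bar>f x\<bar>) ` \<Omega>)"
    using gradient(4) by (auto simp: bounded_iff bdd_above_def)
  then have sup_norm: "\<bar>f x\<bar> \<le> sup_norm_on f \<Omega>" if "x \<in> \<Omega>" for x
    unfolding sup_norm_on_def using that by (rule cSUP_upper2) simp
  with False have "0 \<le> sup_norm_on f \<Omega>"
    by (meson abs_ge_zero ex_in_conv order_trans)
  note bounds = gagliardo_half_seminorm_bounds[OF \<open>convex \<Omega>\<close> \<open>bounded \<Omega>\<close> gradient(1,2) B sup_norm this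
      \<open>0 < r\<close> \<open>r \<le> R\<close>]
  show ?thesis
    using bounds by (simp add: min_def)
qed (use \<open>0 < r\<close> \<open>r \<le> R\<close> in \<open>simp add: set_lebesgue_integral_def\<close>)

end
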